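(* Let $a\in\hat{\mathbb Z}$, $Y^*\in C_+([0,\infty))$, $F\in L^1_{\mathrm{loc}}([0,\infty))$ with $F\ge0$, and let $(\mathscr G_t)$ be a filtration to which $Y^*$, $F$ and $\mathbf W$ are adapted and with respect to which $\mathbf W$ is a Brownian motion. Suppose $Y^*(t)=Y^*(0)+W_a(t)+\beta\int_0^t\big(\frac1{Y^*(s)}-F(s)\big)ds$ for all $t\ge0$. Then for all $t'\le t''$ in $[0,\infty)$, almost surely, $Y^*(t'')-\inf_{s\in[t',t'']}Y^*(s)=\sup_{s\in[t',t'']}(Y^*(t'')-Y^*(s))\le Q^{t'}_a(t'')$ and $\sup_{s<t,\ s,t\in[t',t'']}(Y^*(t)-Y^*(s))\le Q^{t',t''}_a:=\sup_{t\in[t',t'']}Q^{t'}_a(t)$.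
   Context: Fixed $\beta\ge1$. $\hat{\mathbb Z}=\tfrac12+\mathbb Z$; $W_a=B_{a+1/2}-B_{a-1/2}$ where $(B_i)_{i\in\mathbb Z}$ are independent standard Brownian motions; $C_+([0,\infty))=\{y\in C([0,\infty)):y(t)>0\ \forall t\}$. For $t_1\ge0$, $Q^{t_1}_a$ denotes the Bessel-type process started from $0$ at time $t_1$: the process in $C([t_1,\infty))$, strictly positive on $(t_1,\infty)$, solving $Q^{t_1}_a(t)=W_a(t)-W_a(t_1)+\int_{t_1}^t\frac{\beta}{Q^{t_1}_a(s)}ds$, $t\ge t_1$. *)

theory Defs
  imports "HOL-Probability.Probability"
begin

definition filtration :: "'w measure \<Rightarrow> (real \<Rightarrow> 'w measure) \<Rightarrow> bool" where
  "filtration M G \<longleftrightarrow> (\<forall>t\<ge>0. subalgebra M (G t)) \<and>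
     (\<forall>s t. 0 \<le> s \<longrightarrow> s \<le> t \<longrightarrow> sets (G s) \<subseteq> sets (G t))"

definition adapted :: "(real \<Rightarrow> 'w measure) \<Rightarrow> (real \<Rightarrow> 'w \<Rightarrow> real) \<Rightarrow> bool" where
  "adapted G X \<longleftrightarrow> (\<forall>t\<ge>0. X t \<in> borel_measurable (G t))"

definition gen_events :: "'w measure \<Rightarrow> ('w \<Rightarrow> real) \<Rightarrow> 'w set set" where
  "gen_events M X = {X -` A \<inter> space M | A. A \<in> sets borel}"

definition BM_family :: "'w measure \<Rightarrow> (real \<Rightarrow> 'w measure) \<Rightarrow> (int \<Rightarrow> real \<Rightarrow> 'w \<Rightarrow> real) \<Rightarrow> bool" where
  "BM_family M G B \<longleftrightarrow>
     (\<forall>i. adapted G (B i)) \<and>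
     (\<forall>i \<omega>. \<omega> \<in> space M \<longrightarrow> B i 0 \<omega> = 0 \<and> continuous_on {0..} (\<lambda>t. B i t \<omega>)) \<and>
     (\<forall>i s t. 0 \<le> s \<longrightarrow> s < t \<longrightarrow>
        distributed M lborel (\<lambda>\<omega>. B i t \<omega> - B i s \<omega>) (\<lambda>x. ennreal (normal_density 0 (sqrt (t - s)) x))) \<and>
     (\<forall>s t. 0 \<le> s \<longrightarrow> s \<le> t \<longrightarrow>
        prob_space.indep_sets M
          (\<lambda>j. case j of None \<Rightarrow> sets (G s)
                       | Some i \<Rightarrow> gen_events M (\<lambda>\<omega>. B i t \<omega> - B i s \<omega>)) UNIV)"

text \<open>W_a = B_{a+1/2} - B_{a-1/2} for a \<in> 1/2 + \<int>.\<close>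
definition Wa :: "(int \<Rightarrow> real \<Rightarrow> 'w \<Rightarrow> real) \<Rightarrow> real \<Rightarrow> real \<Rightarrow> 'w \<Rightarrow> real" where
  "Wa B a t \<omega> = B \<lfloor>a + 1/2\<rfloor> t \<omega> - B \<lfloor>a - 1/2\<rfloor> t \<omega>"

text \<open>Pathwise characterisation of the Bessel-type process Q^{t1}_a started from 0 at t1
  (for the sample point \<omega>).\<close>
definition is_Q_path :: "real \<Rightarrow> (real \<Rightarrow> real) \<Rightarrow> real \<Rightarrow> (real \<Rightarrow> real) \<Rightarrow> bool" where
  "is_Q_path \<beta> w t1 q \<longleftrightarrow>
     continuous_on {t1..} q \<and> q t1 = 0 \<and> (\<forall>t>t1. q t > 0) \<and>
     (\<forall>t\<ge>t1. set_integrable lborel {t1..t} (\<lambda>s. \<beta> / q s) \<and>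
              q t = w t - w t1 + (LBINT s:{t1..t}. \<beta> / q s))"

end

theory Submission imports Defs begin

(* Everything happens path by path.  Fix a sample path
   and write y, q, w for Y, Q^{t'}_a, W_a along it.  For t' <= s <= t we show
   y t - y s <= q t by a comparison argument: if D r = y r - y s - q r were positive
   at r = t, let u be the last point in [s, t] with D u <= 0.  On (u, t] we have
   y > q > 0, hence the drift 1/y - F of y is at most the drift 1/q of q, while both
   processes are driven by the same noise w; so D t <= D u <= 0, a contradiction.
   The file first proves this deterministic comparison (last_nonpositive_point,
   increment_of_integral_equation, drawup_below_bessel_path), then the identity
   c - inf = sup (c - .) and the three conclusions for a single path
   (path_drawup_bounds), and finally the conversion of the Lebesgue integral
   equations of the hypotheses into Henstock-Kurzweil form (is_Q_path_HK,
   integral_equation_HK).  The theorem follows by applying these on the almost sure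
   event where both integral equations hold. *)

lemma last_nonpositive_point:
  fixes D :: "real \<Rightarrow> real"
  assumes cont: "continuous_on {s..t} D" and "s \<le> t" and "D s \<le> 0"
  obtains u where "s \<le> u" "u \<le> t" "D u \<le> 0" "\<And>r. u < r \<Longrightarrow> r \<le> t \<Longrightarrow> D r > 0"
proof -
  define S where "S = {r \<in> {s..t}. D r \<le> 0}"
  have "closed S" unfolding S_def
    using continuous_on_closed_Collect_le[OF cont continuous_on_const, of 0] by simp
  moreover have "s \<in> S" unfolding S_def using assms by auto
  moreover have bdd: "bdd_above S" unfolding S_def by (rule bdd_aboveI[of _ t]) auto
  ultimately have "Sup S \<in> S" using closed_contains_Sup by blast
  moreover have "D r > 0" if "Sup S < r" "r \<le> t" for r
  proof (rule ccontr)
    assume "\<not> D r > 0"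
    with that \<open>Sup S \<in> S\<close> have "r \<in> S" unfolding S_def by auto
    hence "r \<le> Sup S" using bdd by (rule cSup_upper)
    with that show False by simp
  qed
  ultimately show thesis using that unfolding S_def by auto
qed

lemma increment_of_integral_equation:
  fixes x w g :: "real \<Rightarrow> real"
  assumes eq: "\<And>r. a \<le> r \<Longrightarrow> x r = c + w r + integral {a..r} g"
    and g: "g integrable_on {a..b}" and "a \<le> u" "u \<le> v" "v \<le> b"
  shows "x v - x u = w v - w u + integral {u..v} g"
proof -
  have "g integrable_on {a..v}" using g assms(3-5) by (auto intro: integrable_on_subinterval)
  hence "integral {a..u} g + integral {u..v} g = integral {a..v} g"
    using Henstock_Kurzweil_Integration.integral_combine assms(3,4) by blast
  thus ?thesis using eq[of u] eq[of v] assms(3-5) by simp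
qed

lemma drawup_below_bessel_path:
  fixes y f q w :: "real \<Rightarrow> real" and \<beta> t' s t :: real
  assumes bpos: "\<beta> > 0" and yc: "continuous_on {0..} y" and ypos: "\<And>r. r \<ge> 0 \<Longrightarrow> y r > 0"
    and fint: "\<And>r. r \<ge> 0 \<Longrightarrow> f integrable_on {0..r}"
    and fnn: "\<And>r. r \<ge> 0 \<Longrightarrow> f r \<ge> 0"
    and yeq: "\<And>r. r \<ge> 0 \<Longrightarrow> y r = y 0 + w r + \<beta> * integral {0..r} (\<lambda>r. 1 / y r - f r)"
    and qc: "continuous_on {t'..} q" and q0: "q t' = 0" and qpos: "\<And>r. r > t' \<Longrightarrow> q r > 0"
    and qint: "\<And>r. r \<ge> t' \<Longrightarrow> (\<lambda>r. \<beta> / q r) integrable_on {t'..r}"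
    and qeq: "\<And>r. r \<ge> t' \<Longrightarrow> q r = w r - w t' + integral {t'..r} (\<lambda>r. \<beta> / q r)"
    and "0 \<le> t'" and "t' \<le> s" and "s \<le> t"
  shows "y t - y s \<le> q t"
proof (rule ccontr)
  define D where "D r = y r - y s - q r" for r
  define g where "g r = \<beta> * (1 / y r - f r)" for r
  define h where "h r = \<beta> / q r" for r
  have "continuous_on {s..t} D" unfolding D_def using \<open>0 \<le> t'\<close> \<open>t' \<le> s\<close>
    by (intro continuous_intros continuous_on_subset[OF yc] continuous_on_subset[OF qc]) auto
  moreover have "D s \<le> 0" unfolding D_def using q0 qpos[of s] \<open>t' \<le> s\<close> by (cases "s = t'") auto
  ultimately obtain u where su: "s \<le> u" and "u \<le> t" and Du: "D u \<le> 0"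
    and Dpos: "\<And>r. u < r \<Longrightarrow> r \<le> t \<Longrightarrow> D r > 0"
    using last_nonpositive_point \<open>s \<le> t\<close> by blast
  assume "\<not> y t - y s \<le> q t"
  hence Dt: "D t > 0" unfolding D_def by simp
  with Du have ut: "u < t" using \<open>u \<le> t\<close> by (cases "u = t") auto
  have "continuous_on {0..t} (\<lambda>r. 1 / y r)"
    using yc ypos by (intro continuous_intros continuous_on_subset[OF yc]) (auto simp: less_imp_neq[symmetric])
  hence "(\<lambda>r. 1 / y r) integrable_on {0..t}" by (rule integrable_continuous_interval)
  hence gint: "g integrable_on {0..t}" unfolding g_def
    using fint[of t] \<open>0 \<le> t'\<close> \<open>t' \<le> s\<close> \<open>s \<le> t\<close>
    by (intro integrable_on_mult_right integrable_diff) auto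
  have hint: "h integrable_on {t'..t}" unfolding h_def using qint \<open>t' \<le> s\<close> \<open>s \<le> t\<close> by simp
  have yeq': "y r = y 0 + w r + integral {0..r} g" if "0 \<le> r" for r
    using yeq[OF that] by (simp add: g_def[abs_def])
  have qeq': "q r = - w t' + w r + integral {t'..r} h" if "t' \<le> r" for r
    using qeq[OF that] by (simp add: h_def[abs_def])
  have "y t - y u = w t - w u + integral {u..t} g"
    using increment_of_integral_equation[OF yeq' gint] \<open>0 \<le> t'\<close> \<open>t' \<le> s\<close> su ut by simp
  moreover have "q t - q u = w t - w u + integral {u..t} h"
    using increment_of_integral_equation[OF qeq' hint] \<open>t' \<le> s\<close> su ut by simp
  moreover have "integral {u..t} g \<le> integral {u..t} h"
  proof -
    text \<open>Only the open interval matters: at u itself the comparison of drifts may fail.\<close>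
    have "integral {u<..<t} g \<le> integral {u<..<t} h"
    proof (rule integral_le)
      show "g integrable_on {u<..<t}" "h integrable_on {u<..<t}"
        using integrable_on_subinterval[OF gint, of u t] integrable_on_subinterval[OF hint, of u t]
          \<open>0 \<le> t'\<close> \<open>t' \<le> s\<close> su by (auto simp: integrable_on_open_interval_real)
      fix r assume r: "r \<in> {u<..<t}"
      have "q r > 0" using qpos r \<open>t' \<le> s\<close> su by auto
      moreover have "y r > q r" using Dpos[of r] ypos[of s] r \<open>0 \<le> t'\<close> \<open>t' \<le> s\<close> unfolding D_def by auto
      ultimately have "1 / y r \<le> 1 / q r" by (simp add: frac_le)
      hence "1 / y r - f r \<le> 1 / q r"
        using fnn[of r] r \<open>0 \<le> t'\<close> \<open>t' \<le> s\<close> su by simp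
      thus "g r \<le> h r" unfolding g_def h_def using mult_left_mono[of _ _ \<beta>] bpos by fastforce
    qed
    thus ?thesis by (simp add: integral_open_interval_real[symmetric])
  qed
  ultimately have "D t \<le> D u" unfolding D_def by simp
  with Du Dt show False by simp
qed

lemma diff_INF_eq_SUP_diff:
  fixes y :: "'a \<Rightarrow> real"
  assumes ne: "A \<noteq> {}" and bdd: "bdd_below (y ` A)"
  shows "c - (INF s\<in>A. y s) = (SUP s\<in>A. c - y s)"
proof -
  have bdd': "bdd_above ((\<lambda>s. c - y s) ` A)"
    using bdd by (auto simp: bdd_below_def bdd_above_def intro: diff_left_mono)
  show ?thesis
  proof (rule antisym)
    have "c - (SUP s\<in>A. c - y s) \<le> (INF s\<in>A. y s)"
      by (rule cINF_greatest[OF ne]) (use cSUP_upper[OF _ bdd'] in force)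
    thus "c - (INF s\<in>A. y s) \<le> (SUP s\<in>A. c - y s)" by simp
    show "(SUP s\<in>A. c - y s) \<le> c - (INF s\<in>A. y s)"
      by (rule cSUP_least[OF ne]) (use cINF_lower[OF bdd] in force)
  qed
qed

lemma path_drawup_bounds:
  fixes y q :: "real \<Rightarrow> real"
  assumes yc: "continuous_on {t'..t''} y" and qc: "continuous_on {t'..t''} q" and "t' \<le> t''"
    and drawup: "\<And>s t. t' \<le> s \<Longrightarrow> s \<le> t \<Longrightarrow> t \<le> t'' \<Longrightarrow> y t - y s \<le> q t"
  shows "y t'' - (INF s\<in>{t'..t''}. y s) = (SUP s\<in>{t'..t''}. y t'' - y s) \<and>
     (SUP s\<in>{t'..t''}. y t'' - y s) \<le> q t'' \<and>
     (\<forall>s t. t' \<le> s \<longrightarrow> s < t \<longrightarrow> t \<le> t'' \<longrightarrow> y t - y s \<le> (SUP u\<in>{t'..t''}. q u))"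
proof (intro conjI allI impI)
  have ne: "{t'..t''} \<noteq> {}" using \<open>t' \<le> t''\<close> by simp
  have "bdd_below (y ` {t'..t''})"
    using compact_continuous_image[OF yc compact_Icc] by (simp add: bounded_imp_bdd_below compact_imp_bounded)
  thus "y t'' - (INF s\<in>{t'..t''}. y s) = (SUP s\<in>{t'..t''}. y t'' - y s)"
    by (rule diff_INF_eq_SUP_diff[OF ne])
  show "(SUP s\<in>{t'..t''}. y t'' - y s) \<le> q t''"
    by (rule cSUP_least[OF ne]) (use drawup in auto)
  fix s t assume st: "t' \<le> s" "s < t" "t \<le> t''"
  have "bdd_above (q ` {t'..t''})"
    using compact_continuous_image[OF qc compact_Icc] by (simp add: bounded_imp_bdd_above compact_imp_bounded)
  hence "q t \<le> (SUP u\<in>{t'..t''}. q u)" by (rule cSUP_upper[rotated]) (use st in auto)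
  thus "y t - y s \<le> (SUP u\<in>{t'..t''}. q u)" using drawup[of s t] st by simp
qed

lemma is_Q_path_HK:
  assumes "is_Q_path \<beta> w t1 q"
  shows "continuous_on {t1..} q" and "q t1 = 0" and "\<And>r. r > t1 \<Longrightarrow> q r > 0"
    and "\<And>r. r \<ge> t1 \<Longrightarrow> (\<lambda>s. \<beta> / q s) integrable_on {t1..r}"
    and "\<And>r. r \<ge> t1 \<Longrightarrow> q r = w r - w t1 + integral {t1..r} (\<lambda>s. \<beta> / q s)"
proof -
  show "continuous_on {t1..} q" "q t1 = 0" "\<And>r. r > t1 \<Longrightarrow> q r > 0"
    using assms unfolding is_Q_path_def by auto
  fix r assume "r \<ge> t1"
  hence si: "set_integrable lborel {t1..r} (\<lambda>s. \<beta> / q s)"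
    and eq: "q r = w r - w t1 + (LBINT s:{t1..r}. \<beta> / q s)"
    using assms unfolding is_Q_path_def by blast+
  show "(\<lambda>s. \<beta> / q s) integrable_on {t1..r}"
    using si by (rule set_borel_integral_eq_integral(1))
  show "q r = w r - w t1 + integral {t1..r} (\<lambda>s. \<beta> / q s)"
    using eq set_borel_integral_eq_integral(2)[OF si] by simp
qed

lemma integral_equation_HK:
  fixes y f w :: "real \<Rightarrow> real"
  assumes yc: "continuous_on {0..} y" and ypos: "\<And>r. r \<ge> 0 \<Longrightarrow> y r > 0"
    and fsi: "\<And>r. r \<ge> 0 \<Longrightarrow> set_integrable lborel {0..r} f"
    and eq: "\<forall>r\<ge>0. y r = y 0 + w r + \<beta> * (LBINT s:{0..r}. (1 / y s - f s))"
    and "r \<ge> 0"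
  shows "y r = y 0 + w r + \<beta> * integral {0..r} (\<lambda>s. 1 / y s - f s)"
proof -
  have "continuous_on {0..r} (\<lambda>s. 1 / y s)"
    using ypos by (intro continuous_intros continuous_on_subset[OF yc]) (auto simp: less_imp_neq[symmetric])
  hence "set_integrable lborel {0..r} (\<lambda>s. 1 / y s)"
    by (rule borel_integrable_atLeastAtMost')
  hence "set_integrable lborel {0..r} (\<lambda>s. 1 / y s - f s)"
    using fsi[OF \<open>r \<ge> 0\<close>] by (rule set_integral_diff(1))
  hence "(LBINT s:{0..r}. (1 / y s - f s)) = integral {0..r} (\<lambda>s. 1 / y s - f s)"
    by (rule set_borel_integral_eq_integral(2))
  moreover have "y r = y 0 + w r + \<beta> * (LBINT s:{0..r}. (1 / y s - f s))"
    using eq \<open>r \<ge> 0\<close> by blast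
  ultimately show ?thesis by simp
qed

theorem lemma3p2:
  fixes M :: "'w measure" and G :: "real \<Rightarrow> 'w measure"
    and B :: "int \<Rightarrow> real \<Rightarrow> 'w \<Rightarrow> real"
    and Y F Q :: "real \<Rightarrow> 'w \<Rightarrow> real"
    and \<beta> a t' t'' :: real
  assumes "prob_space M"
    and "\<beta> \<ge> 1"
    and "a - 1/2 \<in> \<int>"
    and "filtration M G"
    and "BM_family M G B"
    and "adapted G Y" and "adapted G F"
    and "\<And>\<omega>. \<omega> \<in> space M \<Longrightarrow> continuous_on {0..} (\<lambda>t. Y t \<omega>) \<and> (\<forall>t\<ge>0. Y t \<omega> > 0)"
    and "\<And>\<omega> t. \<omega> \<in> space M \<Longrightarrow> t \<ge> 0 \<Longrightarrow> F t \<omega> \<ge> 0"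
    and "\<And>\<omega> t. \<omega> \<in> space M \<Longrightarrow> t \<ge> 0 \<Longrightarrow> set_integrable lborel {0..t} (\<lambda>s. F s \<omega>)"
    and "AE \<omega> in M. \<forall>t\<ge>0. Y t \<omega> = Y 0 \<omega> + Wa B a t \<omega>
            + \<beta> * (LBINT s:{0..t}. (1 / Y s \<omega> - F s \<omega>))"
    and "AE \<omega> in M. is_Q_path \<beta> (\<lambda>t. Wa B a t \<omega>) t' (\<lambda>t. Q t \<omega>)"
    and "0 \<le> t'" and "t' \<le> t''"
  shows "AE \<omega> in M.
     Y t'' \<omega> - (INF s\<in>{t'..t''}. Y s \<omega>) = (SUP s\<in>{t'..t''}. Y t'' \<omega> - Y s \<omega>) \<and>
     (SUP s\<in>{t'..t''}. Y t'' \<omega> - Y s \<omega>) \<le> Q t'' \<omega> \<and>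
     (\<forall>s t. t' \<le> s \<longrightarrow> s < t \<longrightarrow> t \<le> t'' \<longrightarrow> Y t \<omega> - Y s \<omega> \<le> (SUP u\<in>{t'..t''}. Q u \<omega>))"
  using assms(11,12) AE_space
proof eventually_elim
  case (elim \<omega>)
  have yc: "continuous_on {0..} (\<lambda>t. Y t \<omega>)" and ypos: "\<And>r. r \<ge> 0 \<Longrightarrow> Y r \<omega> > 0"
    using assms(8)[OF elim(3)] by auto
  note fsi = assms(10)[OF elim(3)]
  have fint: "(\<lambda>s. F s \<omega>) integrable_on {0..r}" if "r \<ge> 0" for r
    using set_borel_integral_eq_integral(1)[OF fsi[OF that]] .
  note yeq = integral_equation_HK[where y = "\<lambda>t. Y t \<omega>", OF yc ypos fsi elim(1)]
  note qpath = is_Q_path_HK[OF elim(2)]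
  have drawup: "Y t \<omega> - Y s \<omega> \<le> Q t \<omega>" if "t' \<le> s" "s \<le> t" for s t
    using assms(2) by (intro drawup_below_bessel_path[OF _ yc ypos fint assms(9)[OF elim(3)] yeq
          qpath assms(13) that]) auto
  show ?case
    using assms(13,14) drawup
    by (intro path_drawup_bounds continuous_on_subset[OF yc] continuous_on_subset[OF qpath(1)]) auto
qed

end
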